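(* Let $C$ be the Klein quartic $\{X^3Y+Y^3Z+Z^3X=0\}\subset\mathbb{C}P^2$ with affine coordinates $x=X^3Y^{-2}Z^{-1}+1$, $y=-XY^{-1}$ (so $y^7=x(1-x)^2$). Let $(h_1,h_2,h_3,h_4)=(1/7,2/7,4/7,1/7)$, $B'_i=B(h_i,h_{i+1})$, $\omega_i=\omega'_i/B'_i$ ($i=1,2,3$) with $\omega'_1=(1-x)dx/y^6$, $\omega'_2=(1-x)dx/y^5$, $\omega'_3=dx/y^3$, let $e_0(t)=(t,\sqrt[7]{t(1-t)^2})$, $t\in[0,1]$ (real nonnegative root), and $x_{i,j}=\int_{e_0}\omega_i\omega_j$ (Chen iterated integral). Then for $i,j\in\{1,2,3\}$, $$x_{i,j}=\frac{B(h_i+h_j,h_{j+1})}{h_iB'_iB'_j}\lim_{t\to1^-,\ t\in\mathbb{R}}{}_3F_2\Big(\begin{matrix}h_i,\ 1-h_{i+1},\ h_i+h_j\\ 1+h_i,\ h_i+h_j+h_{j+1}\end{matrix};t\Big).$$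
   Context: $B$ is the beta function. Chen's iterated integral: if $\gamma^\ast a=f(t)dt$, $\gamma^\ast b=g(t)dt$ on $[0,1]$, then $\int_\gamma ab=\int_{0\le t_1\le t_2\le1}f(t_1)g(t_2)dt_1dt_2$. With $(\alpha,n)=\Gamma(\alpha+n)/\Gamma(\alpha)$, ${}_3F_2\big(\begin{smallmatrix}\alpha_1,\alpha_2,\alpha_3\\ \beta_1,\beta_2\end{smallmatrix};x\big)=\sum_{n\ge0}\frac{(\alpha_1,n)(\alpha_2,n)(\alpha_3,n)}{(\beta_1,n)(\beta_2,n)(1,n)}x^n$ for $|x|<1$. *)

theory Defs
  imports "HOL-Analysis.Analysis"
begin

definition hh :: "nat \<Rightarrow> real" where
  "hh i = (if i = 1 then 1/7 else if i = 2 then 2/7 else if i = 3 then 4/7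
           else if i = 4 then 1/7 else 0)"

definition Bp :: "nat \<Rightarrow> real" where
  "Bp i = Beta (hh i) (hh (i + 1))"

text \<open>Coefficient g_i(x,y) of the differential omega'_i = g_i(x,y) dx on the Klein quartic
  in the affine coordinates x, y (y^7 = x(1-x)^2):
  omega'_1 = (1-x)dx/y^6, omega'_2 = (1-x)dx/y^5, omega'_3 = dx/y^3.\<close>
definition omega_coeff :: "nat \<Rightarrow> real \<Rightarrow> real \<Rightarrow> real" where
  "omega_coeff i x y = (if i = 1 then (1 - x) / y ^ 6
                        else if i = 2 then (1 - x) / y ^ 5
                        else if i = 3 then 1 / y ^ 3 else 0)"

definition e0 :: "real \<Rightarrow> real \<times> real" where
  "e0 t = (t, root 7 (t * (1 - t) ^ 2))"

text \<open>Pullback of omega_i = omega'_i / B'_i along e_0: e_0^* omega_i = f_i(t) dt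
  (since x = t along e_0, dx = dt).\<close>
definition pullback_omega :: "nat \<Rightarrow> real \<Rightarrow> real" where
  "pullback_omega i t = omega_coeff i (fst (e0 t)) (snd (e0 t)) / Bp i"

definition chen_iter :: "(real \<Rightarrow> real) \<Rightarrow> (real \<Rightarrow> real) \<Rightarrow> real" where
  "chen_iter f g = (LINT p : {p :: real \<times> real. 0 \<le> fst p \<and> fst p \<le> snd p \<and> snd p \<le> 1} | lborel.
                      f (fst p) * g (snd p))"

definition xx :: "nat \<Rightarrow> nat \<Rightarrow> real" where
  "xx i j = chen_iter (pullback_omega i) (pullback_omega j)"

definition hyp3F2 :: "real \<Rightarrow> real \<Rightarrow> real \<Rightarrow> real \<Rightarrow> real \<Rightarrow> real \<Rightarrow> real" where
  "hyp3F2 a1 a2 a3 b1 b2 x =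
     (\<Sum>n. pochhammer a1 n * pochhammer a2 n * pochhammer a3 n /
           (pochhammer b1 n * pochhammer b2 n * pochhammer 1 n) * x ^ n)"

end

theory Submission
  imports Defs
begin

text \<open>Along \<open>e\<^sub>0\<close> the form \<open>\<omega>\<^sub>i\<close> pulls back to the Beta density
  \<open>t^(h\<^sub>i - 1) (1 - t)^(h\<^sub>i\<^sub>+\<^sub>1 - 1) dt / B'\<^sub>i\<close>. Expanding
  \<open>(1 - t\<^sub>1)^(h\<^sub>i\<^sub>+\<^sub>1 - 1)\<close> into its binomial series, whose coefficients
  \<open>(1 - h\<^sub>i\<^sub>+\<^sub>1)\<^sub>n / n!\<close> are nonnegative, and integrating term by term over the
  simplex \<open>0 \<le> t\<^sub>1 \<le> t\<^sub>2 \<le> 1\<close> gives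
  \<open>\<Sum>\<^sub>n (1 - h\<^sub>i\<^sub>+\<^sub>1)\<^sub>n / (n! (h\<^sub>i + n)) B(h\<^sub>i + h\<^sub>j + n, h\<^sub>j\<^sub>+\<^sub>1)\<close>;
  the series converges because the integrand is dominated by a product of two Beta densities
  on the unit square. Writing \<open>1 / (h\<^sub>i + n)\<close> and the shifted Beta values through
  Pochhammer symbols turns it into the \<open>\<^sub>3F\<^sub>2\<close> series at \<open>1\<close>, and since its
  coefficients are nonnegative, Abel's theorem identifies this value with the limit from the left.\<close>

lemma Beta_real_pos: "(x::real) > 0 \<Longrightarrow> y > 0 \<Longrightarrow> Beta x y > 0"
  unfolding Beta_def by (intro divide_pos_pos mult_pos_pos Gamma_real_pos) auto

lemma pos_not_nonpos_Ints: "(x::real) > 0 \<Longrightarrow> x \<notin> \<int>\<^sub>\<le>\<^sub>0"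
  using nonpos_Ints_nonpos by fastforce

lemma Beta_add_of_nat_left:
  fixes x y :: real
  assumes "x > 0" "y > 0"
  shows "Beta (x + of_nat n) y = Beta x y * pochhammer x n / pochhammer (x + y) n"
proof -
  have Gamma_pos: "Gamma x > 0" "Gamma (x + y) > 0"
    using assms by auto
  have "Gamma (x + of_nat n) = pochhammer x n * Gamma x"
    using pochhammer_Gamma[OF pos_not_nonpos_Ints[OF assms(1)], of n] Gamma_pos
    by (simp add: field_simps)
  moreover have "Gamma (x + y + of_nat n) = pochhammer (x + y) n * Gamma (x + y)"
    using pochhammer_Gamma[OF pos_not_nonpos_Ints, of "x + y" n] assms Gamma_pos
    by (simp add: field_simps)
  moreover have "pochhammer (x + y) n > 0"
    using assms by (auto intro: pochhammer_pos)
  ultimately show ?thesis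
    unfolding Beta_def using Gamma_pos by (simp add: algebra_simps)
qed

lemma inverse_add_of_nat_pochhammer:
  fixes a :: real
  assumes "a > 0"
  shows "1 / (a + of_nat n) = pochhammer a n / (a * pochhammer (1 + a) n)"
proof -
  have "pochhammer a n * (a + of_nat n) = a * pochhammer (1 + a) n"
    using pochhammer_Suc[of a n] pochhammer_rec[of a n] by (simp add: add.commute)
  moreover have "pochhammer (1 + a) n > 0" "a + of_nat n > 0"
    using assms by (auto intro: pochhammer_pos)
  ultimately show ?thesis
    using assms by (simp add: field_simps)
qed

lemma one_minus_powr_sums:
  fixes t b :: real
  assumes "0 \<le> t" "t < 1"
  shows "(\<lambda>n. pochhammer (1 - b) n / fact n * t ^ n) sums ((1 - t) powr (b - 1))"
proof -
  have "(\<lambda>n. ((b - 1) gchoose n) * (- t) ^ n) sums ((1 + - t) powr (b - 1))"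
    by (rule gen_binomial_real) (use assms in auto)
  moreover have "((b - 1) gchoose n) * (- t) ^ n = pochhammer (1 - b) n / fact n * t ^ n" for n
  proof -
    have "((b - 1) gchoose n) * (- t) ^ n
        = ((-1) ^ n * (-1) ^ n) * (pochhammer (1 - b) n / fact n * t ^ n)"
      unfolding gbinomial_pochhammer by (simp add: power_minus[of t] mult_ac)
    also have "(-1::real) ^ n * (-1) ^ n = 1"
      by (simp flip: power_add)
    finally show ?thesis by simp
  qed
  ultimately show ?thesis by simp
qed

lemma Beta_nn_integral:
  fixes a b :: real
  assumes "a > 0" "b > 0"
  shows "(\<integral>\<^sup>+t. ennreal (indicator {0..1} t * (t powr (a - 1) * (1 - t) powr (b - 1))) \<partial>lborel)
    = ennreal (Beta a b)"
  using nn_integral_has_integral_lebesgue[OF _ has_integral_Beta_real[OF assms]] by simp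

lemma incomplete_Beta_nn_integral_series:
  fixes a b s :: real
  assumes "a > 0" "b < 1" "0 \<le> s" "s \<le> 1"
  shows "(\<integral>\<^sup>+t. ennreal (indicator {0..s} t * (t powr (a - 1) * (1 - t) powr (b - 1))) \<partial>lborel)
    = (\<Sum>n. ennreal (pochhammer (1 - b) n / fact n * (s powr (a + n) / (a + n))))"
proof -
  define p where "p n = pochhammer (1 - b) n / fact n" for n
  have p_nonneg: "p n \<ge> 0" for n
    unfolding p_def using assms(2) by (intro divide_nonneg_pos pochhammer_nonneg) auto
  have "(\<integral>\<^sup>+t. ennreal (indicator {0..s} t * (t powr (a - 1) * (1 - t) powr (b - 1))) \<partial>lborel)
      = (\<integral>\<^sup>+t. (\<Sum>n. ennreal (indicator {0..s} t * (p n * t powr (a - 1 + n)))) \<partial>lborel)"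
  \<comment> \<open>the binomial series diverges at \<open>t = 1\<close>, a null set\<close>
  proof (rule nn_integral_cong_AE, rule eventually_mono[OF AE_lborel_singleton[of 1]])
    fix t :: real
    assume "t \<noteq> 1"
    show "ennreal (indicator {0..s} t * (t powr (a - 1) * (1 - t) powr (b - 1)))
        = (\<Sum>n. ennreal (indicator {0..s} t * (p n * t powr (a - 1 + n))))"
    proof (cases "t \<in> {0..s}")
      case True
      with \<open>t \<noteq> 1\<close> assms have t: "0 \<le> t" "t < 1" by auto
      have "(\<lambda>n. t powr (a - 1) * (p n * t ^ n)) sums (t powr (a - 1) * (1 - t) powr (b - 1))"
        unfolding p_def by (intro sums_mult one_minus_powr_sums t)
      moreover have "t powr (a - 1) * (p n * t ^ n) = p n * t powr (a - 1 + n)" for n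
        using t by (cases "t = 0") (auto simp: powr_add powr_realpow)
      ultimately have "(\<lambda>n. p n * t powr (a - 1 + n)) sums (t powr (a - 1) * (1 - t) powr (b - 1))"
        by simp
      with p_nonneg True show ?thesis
        by (simp add: sums_iff suminf_ennreal2)
    qed auto
  qed
  also have "\<dots> = (\<Sum>n. \<integral>\<^sup>+t. ennreal (indicator {0..s} t * (p n * t powr (a - 1 + n))) \<partial>lborel)"
    by (rule nn_integral_suminf) measurable
  also have "\<dots> = (\<Sum>n. ennreal (p n * (s powr (a + n) / (a + n))))"
  proof (rule suminf_cong)
    fix n :: nat
    have "((\<lambda>t. t powr (a - 1 + n)) has_integral (s powr (a - 1 + n + 1) / (a - 1 + n + 1))) {0..s}"
      using assms by (intro has_integral_powr_from_0) auto
    then have "((\<lambda>t. p n * t powr (a - 1 + n)) has_integral (p n * (s powr (a + n) / (a + n)))) {0..s}"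
      by (intro has_integral_mult_right) simp
    from nn_integral_has_integral_lebesgue[OF _ this] p_nonneg[of n]
    show "(\<integral>\<^sup>+t. ennreal (indicator {0..s} t * (p n * t powr (a - 1 + n))) \<partial>lborel)
        = ennreal (p n * (s powr (a + n) / (a + n)))"
      by simp
  qed
  finally show ?thesis
    by (simp add: p_def)
qed

definition chen_simplex :: "(real \<times> real) set" where
  "chen_simplex = {p. 0 \<le> fst p \<and> fst p \<le> snd p \<and> snd p \<le> 1}"

lemma chen_simplex_in_sets_lborel_prod [measurable]: "chen_simplex \<in> sets (lborel \<Otimes>\<^sub>M lborel)"
proof -
  have "chen_simplex \<in> sets borel"
    unfolding chen_simplex_def
    by (intro borel_closed closed_Collect_conj closed_Collect_le continuous_intros)
  then show ?thesis
    by (metis lborel_prod sets_lborel)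
qed

lemma chen_simplex_in_sets_lborel: "chen_simplex \<in> sets lborel"
  using chen_simplex_in_sets_lborel_prod by (metis lborel_prod)

lemma nn_integral_chen_simplex:
  fixes f g :: "real \<Rightarrow> real"
  assumes [measurable]: "f \<in> borel_measurable borel" "g \<in> borel_measurable borel"
    and f_nonneg: "\<And>t. f t \<ge> 0" and g_nonneg: "\<And>t. g t \<ge> 0"
  shows "(\<integral>\<^sup>+p. ennreal (indicator chen_simplex p * (f (fst p) * g (snd p))) \<partial>lborel)
    = (\<integral>\<^sup>+t\<^sub>2. ennreal (indicator {0..1} t\<^sub>2 * g t\<^sub>2)
          * (\<integral>\<^sup>+t\<^sub>1. ennreal (indicator {0..t\<^sub>2} t\<^sub>1 * f t\<^sub>1) \<partial>lborel) \<partial>lborel)"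
proof -
  have "(\<lambda>p. ennreal (indicator chen_simplex p * (f (fst p) * g (snd p))))
      \<in> borel_measurable (lborel \<Otimes>\<^sub>M lborel)"
    by measurable
  from lborel_pair.nn_integral_snd[OF this]
  have "(\<integral>\<^sup>+p. ennreal (indicator chen_simplex p * (f (fst p) * g (snd p))) \<partial>lborel)
      = (\<integral>\<^sup>+t\<^sub>2. \<integral>\<^sup>+t\<^sub>1. ennreal (indicator chen_simplex (t\<^sub>1, t\<^sub>2) * (f t\<^sub>1 * g t\<^sub>2)) \<partial>lborel \<partial>lborel)"
    by (simp add: lborel_prod)
  also have "\<dots> = (\<integral>\<^sup>+t\<^sub>2. \<integral>\<^sup>+t\<^sub>1. ennreal (indicator {0..1} t\<^sub>2 * g t\<^sub>2)
                     * ennreal (indicator {0..t\<^sub>2} t\<^sub>1 * f t\<^sub>1) \<partial>lborel \<partial>lborel)"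
    by (intro nn_integral_cong)
       (auto simp: chen_simplex_def indicator_def f_nonneg g_nonneg simp flip: ennreal_mult')
  also have "\<dots> = (\<integral>\<^sup>+t\<^sub>2. ennreal (indicator {0..1} t\<^sub>2 * g t\<^sub>2)
          * (\<integral>\<^sup>+t\<^sub>1. ennreal (indicator {0..t\<^sub>2} t\<^sub>1 * f t\<^sub>1) \<partial>lborel) \<partial>lborel)"
    by (intro nn_integral_cong nn_integral_cmult) simp
  finally show ?thesis .
qed

lemma Beta_density_mult_incomplete_Beta_series:
  fixes a b c d t :: real
  assumes "a > 0" "b < 1" "0 \<le> t" "t \<le> 1"
  shows "ennreal (t powr (c - 1) * (1 - t) powr (d - 1))
      * (\<integral>\<^sup>+s. ennreal (indicator {0..t} s * (s powr (a - 1) * (1 - s) powr (b - 1))) \<partial>lborel)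
    = (\<Sum>n. ennreal (pochhammer (1 - b) n / fact n / (a + n)
                      * (t powr (a + c + n - 1) * (1 - t) powr (d - 1))))"
proof -
  define g where "g = t powr (c - 1) * (1 - t) powr (d - 1)"
  have "g * (pochhammer (1 - b) n / fact n * (t powr (a + n) / (a + n)))
      = pochhammer (1 - b) n / fact n / (a + n) * (t powr (a + c + n - 1) * (1 - t) powr (d - 1))"
    for n :: nat
  proof (cases "t = 0")
    case False
    then have "t powr (c - 1) * t powr (a + n) = t powr (a + c + n - 1)"
      using assms by (simp add: powr_add[symmetric] algebra_simps)
    then show ?thesis
      unfolding g_def by (simp add: field_simps)
  qed (simp add: g_def)
  note termwise = this
  have "g \<ge> 0"
    unfolding g_def by simp
  have "ennreal g
      * (\<integral>\<^sup>+s. ennreal (indicator {0..t} s * (s powr (a - 1) * (1 - s) powr (b - 1))) \<partial>lborel)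
    = ennreal g * (\<Sum>n. ennreal (pochhammer (1 - b) n / fact n * (t powr (a + n) / (a + n))))"
    using assms by (simp only: incomplete_Beta_nn_integral_series)
  also have "\<dots> = (\<Sum>n. ennreal (g * (pochhammer (1 - b) n / fact n * (t powr (a + n) / (a + n)))))"
    using \<open>g \<ge> 0\<close> by (simp only: ennreal_mult' ennreal_suminf_cmult)
  also have "\<dots> = (\<Sum>n. ennreal (pochhammer (1 - b) n / fact n / (a + n)
                      * (t powr (a + c + n - 1) * (1 - t) powr (d - 1))))"
    by (simp only: termwise)
  finally show ?thesis
    unfolding g_def .
qed

lemma chen_simplex_Beta_nn_integral_series:
  fixes a b c d :: real
  assumes a: "a > 0" and b: "b < 1" and c: "c > 0" and d: "d > 0"
  shows "(\<integral>\<^sup>+p. ennreal (indicator chen_simplex p *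
            ((fst p powr (a - 1) * (1 - fst p) powr (b - 1)) *
             (snd p powr (c - 1) * (1 - snd p) powr (d - 1)))) \<partial>lborel)
    = (\<Sum>n. ennreal (pochhammer (1 - b) n / fact n / (a + n) * Beta (a + c + n) d))"
proof -
  define summand where "summand n t = pochhammer (1 - b) n / fact n / (a + n)
      * (t powr (a + c + n - 1) * (1 - t) powr (d - 1))" for n :: nat and t :: real
  have summand_nonneg: "summand n t \<ge> 0" for n t
    unfolding summand_def using a b
    by (intro mult_nonneg_nonneg divide_nonneg_pos pochhammer_nonneg) auto
  have "(\<integral>\<^sup>+p. ennreal (indicator chen_simplex p *
            ((fst p powr (a - 1) * (1 - fst p) powr (b - 1)) *
             (snd p powr (c - 1) * (1 - snd p) powr (d - 1)))) \<partial>lborel)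
      = (\<integral>\<^sup>+t. (\<Sum>n. ennreal (indicator {0..1} t * summand n t)) \<partial>lborel)"
  proof (subst nn_integral_chen_simplex, simp_all, intro nn_integral_cong)
    fix t :: real
    show "ennreal (indicator {0..1} t * (t powr (c - 1) * (1 - t) powr (d - 1)))
        * (\<integral>\<^sup>+s. ennreal (indicator {0..t} s * (s powr (a - 1) * (1 - s) powr (b - 1))) \<partial>lborel)
      = (\<Sum>n. ennreal (indicator {0..1} t * summand n t))"
      using a b Beta_density_mult_incomplete_Beta_series[of a b t c d]
      by (cases "t \<in> {0..1}") (simp_all add: summand_def)
  qed
  also have "\<dots> = (\<Sum>n. \<integral>\<^sup>+t. ennreal (indicator {0..1} t * summand n t) \<partial>lborel)"
    unfolding summand_def by (rule nn_integral_suminf) measurable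
  also have "\<dots> = (\<Sum>n. ennreal (pochhammer (1 - b) n / fact n / (a + n) * Beta (a + c + n) d))"
  proof (rule suminf_cong)
    fix n :: nat
    have "(summand n has_integral (pochhammer (1 - b) n / fact n / (a + n) * Beta (a + c + n) d)) {0..1}"
      unfolding summand_def using a c d
      by (intro has_integral_mult_right has_integral_Beta_real) (auto intro: add_pos_nonneg)
    from nn_integral_has_integral_lebesgue[OF summand_nonneg this]
    show "(\<integral>\<^sup>+t. ennreal (indicator {0..1} t * summand n t) \<partial>lborel)
        = ennreal (pochhammer (1 - b) n / fact n / (a + n) * Beta (a + c + n) d)" .
  qed
  finally show ?thesis .
qed

lemma chen_simplex_Beta_nn_integral_le:
  fixes a b c d :: real
  assumes "a > 0" "b > 0" "c > 0" "d > 0"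
  shows "(\<integral>\<^sup>+p. ennreal (indicator chen_simplex p *
            ((fst p powr (a - 1) * (1 - fst p) powr (b - 1)) *
             (snd p powr (c - 1) * (1 - snd p) powr (d - 1)))) \<partial>lborel)
    \<le> ennreal (Beta a b * Beta c d)"
proof -
  define f where "f t = t powr (a - 1) * (1 - t) powr (b - 1)" for t :: real
  define g where "g t = t powr (c - 1) * (1 - t) powr (d - 1)" for t :: real
  have f_nonneg: "f t \<ge> 0" and g_nonneg: "g t \<ge> 0" for t
    unfolding f_def g_def by simp_all
  have "(\<integral>\<^sup>+p. ennreal (indicator chen_simplex p * (f (fst p) * g (snd p))) \<partial>lborel)
      = (\<integral>\<^sup>+t. ennreal (indicator {0..1} t * g t)
           * (\<integral>\<^sup>+s. ennreal (indicator {0..t} s * f s) \<partial>lborel) \<partial>lborel)"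
    unfolding f_def g_def by (rule nn_integral_chen_simplex) auto
  also have "\<dots> \<le> (\<integral>\<^sup>+t. ennreal (indicator {0..1} t * g t) * ennreal (Beta a b) \<partial>lborel)"
  proof (rule nn_integral_mono)
    fix t :: real
    have "(\<integral>\<^sup>+s. ennreal (indicator {0..t} s * f s) \<partial>lborel)
        \<le> (\<integral>\<^sup>+s. ennreal (indicator {0..1} s * f s) \<partial>lborel)" if "t \<le> 1"
      using that by (intro nn_integral_mono) (auto simp: indicator_def f_nonneg)
    then show "ennreal (indicator {0..1} t * g t) * (\<integral>\<^sup>+s. ennreal (indicator {0..t} s * f s) \<partial>lborel)
        \<le> ennreal (indicator {0..1} t * g t) * ennreal (Beta a b)"
      using assms unfolding f_def
      by (cases "t \<in> {0..1}") (auto simp: Beta_nn_integral intro: mult_left_mono)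
  qed
  also have "\<dots> = ennreal (Beta c d) * ennreal (Beta a b)"
    using assms by (simp add: nn_integral_multc g_def Beta_nn_integral)
  finally show ?thesis
    using assms unfolding f_def g_def by (simp add: ennreal_mult Beta_real_pos less_imp_le mult.commute)
qed

lemma chen_simplex_Beta_integral_series:
  fixes a b c d :: real
  assumes a: "a > 0" and b: "0 < b" "b < 1" and c: "c > 0" and d: "d > 0"
  defines "\<beta> \<equiv> \<lambda>n. pochhammer (1 - b) n / fact n / (a + n) * Beta (a + c + n) d"
  shows "summable \<beta>"
    and "(LINT p:chen_simplex|lborel. (fst p powr (a - 1) * (1 - fst p) powr (b - 1)) *
            (snd p powr (c - 1) * (1 - snd p) powr (d - 1))) = (\<Sum>n. \<beta> n)"
proof -
  define F where "F p = indicator chen_simplex p *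
      ((fst p powr (a - 1) * (1 - fst p) powr (b - 1)) * (snd p powr (c - 1) * (1 - snd p) powr (d - 1)))"
    for p :: "real \<times> real"
  have \<beta>_nonneg: "\<beta> n \<ge> 0" for n
    unfolding \<beta>_def using a b c d
    by (intro mult_nonneg_nonneg divide_nonneg_pos pochhammer_nonneg less_imp_le[OF Beta_real_pos]) auto
  have series: "(\<integral>\<^sup>+p. ennreal (F p) \<partial>lborel) = (\<Sum>n. ennreal (\<beta> n))"
    unfolding F_def \<beta>_def using chen_simplex_Beta_nn_integral_series[OF a b(2) c d] .
  have "(\<integral>\<^sup>+p. ennreal (F p) \<partial>lborel) \<noteq> top"
    unfolding F_def by (rule neq_top_trans[OF ennreal_neq_top chen_simplex_Beta_nn_integral_le[OF a b(1) c d]])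
  with series \<beta>_nonneg show summable: "summable \<beta>"
    by (intro summable_suminf_not_top) auto
  have "F \<in> borel_measurable (lborel \<Otimes>\<^sub>M lborel)"
    unfolding F_def by measurable
  then have "integral\<^sup>L lborel F = enn2real (\<integral>\<^sup>+p. ennreal (F p) \<partial>lborel)"
    by (intro integral_eq_nn_integral) (auto simp: lborel_prod F_def)
  also have "\<dots> = (\<Sum>n. \<beta> n)"
    using series summable \<beta>_nonneg by (simp add: suminf_ennreal2 suminf_nonneg)
  finally show "(LINT p:chen_simplex|lborel. (fst p powr (a - 1) * (1 - fst p) powr (b - 1)) *
            (snd p powr (c - 1) * (1 - snd p) powr (d - 1))) = (\<Sum>n. \<beta> n)"
    unfolding set_lebesgue_integral_def F_def by simp
qed

definition hyp3F2_coeff :: "real \<Rightarrow> real \<Rightarrow> real \<Rightarrow> real \<Rightarrow> real \<Rightarrow> nat \<Rightarrow> real" where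
  "hyp3F2_coeff a1 a2 a3 b1 b2 n = pochhammer a1 n * pochhammer a2 n * pochhammer a3 n /
     (pochhammer b1 n * pochhammer b2 n * pochhammer 1 n)"

lemma hyp3F2_eq_power_series:
  "hyp3F2 a1 a2 a3 b1 b2 x = (\<Sum>n. hyp3F2_coeff a1 a2 a3 b1 b2 n * x ^ n)"
  unfolding hyp3F2_def hyp3F2_coeff_def ..

lemma hyp3F2_coeff_nonneg:
  assumes "a1 > 0" "a2 > 0" "a3 > 0" "b1 > 0" "b2 > 0"
  shows "hyp3F2_coeff a1 a2 a3 b1 b2 n \<ge> 0"
  unfolding hyp3F2_coeff_def using assms
  by (intro divide_nonneg_pos mult_nonneg_nonneg mult_pos_pos pochhammer_nonneg pochhammer_pos) auto

lemma chen_simplex_Beta_integral_hyp3F2: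
  fixes a b c d :: real
  assumes a: "a > 0" and b: "0 < b" "b < 1" and c: "c > 0" and d: "d > 0"
  defines "q \<equiv> hyp3F2_coeff a (1 - b) (a + c) (1 + a) (a + c + d)"
  shows "summable q"
    and "(LINT p:chen_simplex|lborel. (fst p powr (a - 1) * (1 - fst p) powr (b - 1)) *
            (snd p powr (c - 1) * (1 - snd p) powr (d - 1))) = Beta (a + c) d / a * (\<Sum>n. q n)"
proof -
  define K where "K = Beta (a + c) d / a"
  have "K > 0"
    unfolding K_def using a c d by (intro divide_pos_pos Beta_real_pos) auto
  have summand_eq: "pochhammer (1 - b) n / fact n / (a + n) * Beta (a + c + n) d = K * q n" for n
  proof -
    have "pochhammer (1 - b) n / fact n / (a + n) * Beta (a + c + n) d
        = pochhammer (1 - b) n / fact n * (pochhammer a n / (a * pochhammer (1 + a) n)) *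
          (Beta (a + c) d * pochhammer (a + c) n / pochhammer (a + c + d) n)"
      using inverse_add_of_nat_pochhammer[OF a, of n] Beta_add_of_nat_left[of "a + c" d n] a c d
      by (simp add: divide_inverse)
    also have "\<dots> = K * q n"
      unfolding K_def q_def hyp3F2_coeff_def pochhammer_fact by (simp add: field_simps)
    finally show ?thesis .
  qed
  note series = chen_simplex_Beta_integral_series[OF a b c d, unfolded summand_eq]
  from summable_divide[OF series(1), of K] \<open>K > 0\<close> show "summable q"
    by simp
  then show "(LINT p:chen_simplex|lborel. (fst p powr (a - 1) * (1 - fst p) powr (b - 1)) *
            (snd p powr (c - 1) * (1 - snd p) powr (d - 1))) = Beta (a + c) d / a * (\<Sum>n. q n)"
    by (simp only: series(2) suminf_mult K_def)
qed

lemma Abel_limit_nonneg: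
  fixes q :: "nat \<Rightarrow> real"
  assumes "\<And>n. q n \<ge> 0" and "summable q"
  shows "((\<lambda>t. \<Sum>n. q n * t ^ n) \<longlongrightarrow> (\<Sum>n. q n)) (at_left 1)"
proof -
  have "uniform_limit {0..1} (\<lambda>n t. \<Sum>i<n. q i * t ^ i) (\<lambda>t. \<Sum>i. q i * t ^ i) sequentially"
  proof (rule Weierstrass_m_test[OF _ assms(2)])
    fix n and t :: real
    assume "t \<in> {0..1}"
    then show "norm (q n * t ^ n) \<le> q n"
      using assms(1)[of n] by (auto simp: abs_mult intro!: mult_left_le power_le_one)
  qed
  then have "continuous_on {0..1} (\<lambda>t. \<Sum>i. q i * t ^ i)"
    by (rule uniform_limit_theorem[rotated]) (auto intro!: always_eventually continuous_intros)
  then have "((\<lambda>t. \<Sum>i. q i * t ^ i) \<longlongrightarrow> (\<Sum>i. q i * 1 ^ i)) (at 1 within {0..1})"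
    unfolding continuous_on_def by (metis atLeastAtMost_iff order.refl zero_le_one)
  then show ?thesis
    by (simp add: at_within_Icc_at_left)
qed

lemma root_power_quotient:
  fixes t :: real
  assumes "0 < t" "t < 1"
  shows "(1 - t) ^ m / root 7 (t * (1 - t) ^ 2) ^ k
    = t powr (- (k / 7)) * (1 - t) powr (m - 2 * k / 7)"
proof -
  have "root 7 (t * (1 - t) ^ 2) = (t * (1 - t) ^ 2) powr (1 / 7)"
    using assms by (simp add: root_powr_inverse)
  also have "\<dots> = t powr (1 / 7) * ((1 - t) powr 2) powr (1 / 7)"
    using assms by (simp add: powr_mult powr_realpow)
  also have "\<dots> = t powr (1 / 7) * (1 - t) powr (2 / 7)"
    by (simp add: powr_powr)
  finally have "root 7 (t * (1 - t) ^ 2) ^ k = (t powr (1 / 7)) ^ k * ((1 - t) powr (2 / 7)) ^ k"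
    by (simp add: power_mult_distrib)
  also have "\<dots> = t powr (k / 7) * (1 - t) powr (2 * k / 7)"
    using assms by (simp add: powr_power mult.commute)
  finally have root_power: "root 7 (t * (1 - t) ^ 2) ^ k = t powr (k / 7) * (1 - t) powr (2 * k / 7)" .
  have "(1 - t) powr (m - 2 * k / 7) = (1 - t) ^ m / (1 - t) powr (2 * k / 7)"
    using assms by (simp add: powr_diff powr_realpow)
  moreover have "t powr (- (k / 7)) = 1 / t powr (k / 7)"
    by (simp add: powr_minus_divide)
  ultimately show ?thesis
    unfolding root_power by simp
qed

lemma pullback_omega_eq_Beta_density:
  assumes "i \<in> {1, 2, 3}" "0 \<le> t" "t \<le> 1"
  shows "pullback_omega i t = t powr (hh i - 1) * (1 - t) powr (hh (i + 1) - 1) / Bp i"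
proof (cases "t = 0 \<or> t = 1")
  case True
  \<comment> \<open>both sides vanish: \<open>y = 0\<close> there, and \<open>x / 0 = 0\<close>, \<open>0 powr r = 0\<close>\<close>
  then show ?thesis
    using assms(1) by (auto simp: pullback_omega_def e0_def omega_coeff_def)
next
  case False
  with assms have t: "0 < t" "t < 1"
    by auto
  have "omega_coeff i t (root 7 (t * (1 - t) ^ 2)) = t powr (hh i - 1) * (1 - t) powr (hh (i + 1) - 1)"
    using assms(1) root_power_quotient[OF t, of 1 6] root_power_quotient[OF t, of 1 5]
      root_power_quotient[OF t, of 0 3]
    by (auto simp: omega_coeff_def hh_def)
  then show ?thesis
    by (simp add: pullback_omega_def e0_def)
qed

lemma hh_pos_lt_1:
  assumes "i \<in> {1, 2, 3}"
  shows "0 < hh i" "0 < hh (i + 1)" "hh (i + 1) < 1"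
  using assms by (auto simp: hh_def)

theorem lemma4p13:
  fixes i j :: nat
  assumes "i \<in> {1, 2, 3}" and "j \<in> {1, 2, 3}"
  shows "\<exists>L. ((\<lambda>t. hyp3F2 (hh i) (1 - hh (i + 1)) (hh i + hh j)
                         (1 + hh i) (hh i + hh j + hh (j + 1)) t) \<longlongrightarrow> L) (at_left 1)
            \<and> xx i j = Beta (hh i + hh j) (hh (j + 1)) / (hh i * Bp i * Bp j) * L"
proof -
  define a b c d where "a = hh i" and "b = hh (i + 1)" and "c = hh j" and "d = hh (j + 1)"
  define q where "q = hyp3F2_coeff a (1 - b) (a + c) (1 + a) (a + c + d)"
  have pos: "a > 0" "0 < b" "b < 1" "c > 0" "d > 0"
    using hh_pos_lt_1[OF assms(1)] hh_pos_lt_1[OF assms(2)] by (simp_all add: a_def b_def c_def d_def)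
  have "xx i j = (LINT p:chen_simplex|lborel. (fst p powr (a - 1) * (1 - fst p) powr (b - 1)) *
                   (snd p powr (c - 1) * (1 - snd p) powr (d - 1)) / (Bp i * Bp j))"
    unfolding xx_def chen_iter_def chen_simplex_def[symmetric]
    by (rule set_lebesgue_integral_cong[OF chen_simplex_in_sets_lborel])
       (use assms in \<open>auto simp: chen_simplex_def pullback_omega_eq_Beta_density a_def b_def c_def d_def\<close>)
  also have "\<dots> = Beta (hh i + hh j) (hh (j + 1)) / (hh i * Bp i * Bp j) * (\<Sum>n. q n)"
    using chen_simplex_Beta_integral_hyp3F2(2)[OF pos] by (simp add: q_def a_def c_def d_def)
  finally have "xx i j = Beta (hh i + hh j) (hh (j + 1)) / (hh i * Bp i * Bp j) * (\<Sum>n. q n)" .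
  moreover have "((\<lambda>t. hyp3F2 (hh i) (1 - hh (i + 1)) (hh i + hh j)
                         (1 + hh i) (hh i + hh j + hh (j + 1)) t) \<longlongrightarrow> (\<Sum>n. q n)) (at_left 1)"
    using Abel_limit_nonneg[OF _ chen_simplex_Beta_integral_hyp3F2(1)[OF pos]] pos
    unfolding hyp3F2_eq_power_series q_def a_def b_def c_def d_def
    by (simp add: hyp3F2_coeff_nonneg)
  ultimately show ?thesis
    by blast
qed

end
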